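(* For all $i_1,\dots,i_n\in\mathbb{N}_0$, $$\sum_{j=1}^{n-1}\frac{1}{2^j}\,\mathtt{m}\big(x_j^{2^{j+1}i_j}\big)+\frac{1}{2^{n-1}}\,\mathtt{m}\big(x_n^{2^ni_n}\big)-\mathtt{m}_{i_1,\dots,i_n}^2\in\operatorname{qm}(\emptyset,\emptyset).$$
   Context: Let $\mathbb{R}[\underline x]=\mathbb{R}[x_1,\dots,x_n]$, $\mathscr{M}=\mathbb{R}[\mathtt{m}_{i_1,\dots,i_n}\colon (i_1,\dots,i_n)\in\mathbb{N}_0^n]$ the polynomial ring in countably many indeterminates with $\mathtt{m}_{0,\dots,0}:=1$, $\mathscr{M}[\underline x]=\mathscr{M}\otimes_{\mathbb{R}}\mathbb{R}[\underline x]$, and $\mathtt{m}:\mathscr{M}[\underline x]\to\mathscr{M}$ the unique $\mathscr{M}$-linear map with $\mathtt{m}(x_1^{i_1}\cdots x_n^{i_n})=\mathtt{m}_{i_1,\dots,i_n}$. $\operatorname{qm}(\emptyset,\emptyset)$ is the quadratic module of $\mathscr{M}$ generated by $\{\mathtt{m}(f^2)\colon f\in\mathscr{M}[\underline x]\}$ (smallest subset of $\mathscr{M}$ containing $1$ and these elements, closed under addition and under multiplication by squares of elements of $\mathscr{M}$). *)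

theory Defs
  imports Complex_Main "HOL-Library.Poly_Mapping"
begin

text \<open>Multi-indices (i_1,...,i_n) in N_0^n are represented as finitely supported
  maps nat \<Rightarrow>0 nat with keys in {..<n}; coordinate j (1-based) is index j-1.\<close>
type_synonym mindex = "nat \<Rightarrow>\<^sub>0 nat"

text \<open>The ring M: real polynomials in the indeterminates m_alpha (alpha a multi-index).\<close>
type_synonym Mring = "(mindex \<Rightarrow>\<^sub>0 nat) \<Rightarrow>\<^sub>0 real"

text \<open>M[x]: polynomials in x_1..x_n (x_j is index j-1) with coefficients in M.\<close>
type_synonym Mxring = "mindex \<Rightarrow>\<^sub>0 Mring"

definition constM :: "real \<Rightarrow> Mring" where
  "constM c = Poly_Mapping.single 0 c"

text \<open>The indeterminate m_alpha, with m_0 := 1.\<close>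
definition mvar :: "mindex \<Rightarrow> Mring" where
  "mvar \<alpha> = (if \<alpha> = 0 then 1 else Poly_Mapping.single (Poly_Mapping.single \<alpha> 1) 1)"

text \<open>The variable x_{j+1} in M[x].\<close>
definition xvar :: "nat \<Rightarrow> Mxring" where
  "xvar j = Poly_Mapping.single (Poly_Mapping.single j 1) 1"

definition Mcarrier :: "nat \<Rightarrow> Mring set" where
  "Mcarrier n = {p::Mring. \<forall>\<nu>\<in>Poly_Mapping.keys p. \<forall>\<alpha>\<in>Poly_Mapping.keys \<nu>. \<alpha> \<noteq> 0 \<and> Poly_Mapping.keys \<alpha> \<subseteq> {..<n}}"

definition Mxcarrier :: "nat \<Rightarrow> Mxring set" where
  "Mxcarrier n = {f::Mxring. \<forall>\<beta>\<in>Poly_Mapping.keys f. Poly_Mapping.keys \<beta> \<subseteq> {..<n} \<and> Poly_Mapping.lookup f \<beta> \<in> Mcarrier n}"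

text \<open>The M-linear map m : M[x] \<rightarrow> M with m(x^alpha) = m_alpha.\<close>
definition Lm :: "Mxring \<Rightarrow> Mring" where
  "Lm f = (\<Sum>\<beta>\<in>Poly_Mapping.keys f. Poly_Mapping.lookup f \<beta> * mvar \<beta>)"

text \<open>qm(\<emptyset>,\<emptyset>) in M (for n variables): the quadratic module generated by the m(f^2).\<close>
inductive_set qm0 :: "nat \<Rightarrow> Mring set" for n :: nat where
  one: "1 \<in> qm0 n"
| gen: "f \<in> Mxcarrier n \<Longrightarrow> Lm (f * f) \<in> qm0 n"
| add: "a \<in> qm0 n \<Longrightarrow> b \<in> qm0 n \<Longrightarrow> a + b \<in> qm0 n"
| sqmult: "a \<in> qm0 n \<Longrightarrow> g \<in> Mcarrier n \<Longrightarrow> g * g * a \<in> qm0 n"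

end

theory Submission
  imports Defs
begin

text \<open>Write a \<le> b for b - a \<in> qm(\<emptyset>,\<emptyset>). Applying m to the squares of x^\<alpha> - m_\<alpha> and
  x^\<beta> - x^\<gamma> gives m_\<alpha>^2 \<le> m_2\<alpha> and m_(\<beta>+\<gamma>) \<le> (m_2\<beta> + m_2\<gamma>)/2.
  Starting from m_i^2 \<le> m_2i, split the exponent 2 * 2^k (0,...,0,i_k,...,i_n) as \<beta> + \<gamma> with
  \<beta> = 2^(k+1) i_k e_k and \<gamma> = 2^k (0,...,0,i_(k+1),...,i_n) and apply the second inequality;
  after n - 1 splittings only powers of single variables remain, with the weights 1/2^j of the
  statement.\<close>

lemma Lm_sum:
  assumes "finite S" "Poly_Mapping.keys f \<subseteq> S"
  shows "Lm f = (\<Sum>\<beta>\<in>S. Poly_Mapping.lookup f \<beta> * mvar \<beta>)"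
  unfolding Lm_def
  by (rule sum.mono_neutral_left) (use assms in \<open>auto simp: in_keys_iff\<close>)

lemma Lm_add: "Lm (f + g) = Lm f + Lm g"
proof -
  let ?S = "Poly_Mapping.keys f \<union> Poly_Mapping.keys g"
  have "Lm (f + g) = (\<Sum>\<beta>\<in>?S. Poly_Mapping.lookup (f + g) \<beta> * mvar \<beta>)"
    by (rule Lm_sum) (use keys_add[of f g] in auto)
  also have "\<dots> = (\<Sum>\<beta>\<in>?S. Poly_Mapping.lookup f \<beta> * mvar \<beta>)
                 + (\<Sum>\<beta>\<in>?S. Poly_Mapping.lookup g \<beta> * mvar \<beta>)"
    by (simp add: lookup_add distrib_right sum.distrib)
  also have "\<dots> = Lm f + Lm g"
    by (simp add: Lm_sum[symmetric])
  finally show ?thesis .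
qed

lemma Lm_uminus: "Lm (- f) = - Lm f"
  unfolding Lm_def by (simp add: sum_negf)

lemma Lm_diff: "Lm (f - g) = Lm f - Lm g"
  using Lm_add[of f "- g"] by (simp add: Lm_uminus)

lemma Lm_single: "Lm (Poly_Mapping.single \<beta> a) = a * mvar \<beta>"
  by (subst Lm_sum[of "{\<beta>}"]) auto

lemma xvar_power: "xvar j ^ k = Poly_Mapping.single (Poly_Mapping.single j k) 1"
  by (induction k) (simp_all add: xvar_def mult_single single_add[symmetric])

lemma Lm_xvar_power: "Lm (xvar j ^ k) = mvar (Poly_Mapping.single j k)"
  by (simp add: xvar_power Lm_single)

lemma mvar_zero: "mvar 0 = 1"
  unfolding mvar_def by simp

lemma Lm_binomial_square:
  fixes a b :: Mring
  shows "Lm ((Poly_Mapping.single \<beta> a - Poly_Mapping.single \<gamma> b)\<^sup>2)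
    = a * a * mvar (\<beta> + \<beta>) - 2 * a * b * mvar (\<beta> + \<gamma>) + b * b * mvar (\<gamma> + \<gamma>)"
proof -
  have "(Poly_Mapping.single \<beta> a - Poly_Mapping.single \<gamma> b)\<^sup>2
      = Poly_Mapping.single (\<beta> + \<beta>) (a * a) - Poly_Mapping.single (\<beta> + \<gamma>) (2 * a * b)
        + Poly_Mapping.single (\<gamma> + \<gamma>) (b * b)"
    by (simp add: power2_eq_square algebra_simps mult_single add.commute[of \<gamma> \<beta>]
        single_add[symmetric] mult_2)
  then show ?thesis
    by (simp only: Lm_add Lm_diff Lm_single)
qed

lemma constM_mult: "constM a * constM b = constM (a * b)"
  unfolding constM_def by (simp add: mult_single)

lemma constM_add: "constM a + constM b = constM (a + b)"
  unfolding constM_def by (simp add: single_add)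

lemma constM_one: "constM 1 = 1"
  unfolding constM_def by simp

lemma constM_in_Mcarrier: "constM c \<in> Mcarrier n"
  unfolding Mcarrier_def constM_def by simp

lemma one_in_Mcarrier: "1 \<in> Mcarrier n"
  using constM_in_Mcarrier[of 1 n] by (simp add: constM_one)

lemma mvar_in_Mcarrier: "Poly_Mapping.keys \<alpha> \<subseteq> {..<n} \<Longrightarrow> mvar \<alpha> \<in> Mcarrier n"
  unfolding Mcarrier_def mvar_def by auto

lemma diff_in_Mcarrier: "p \<in> Mcarrier n \<Longrightarrow> q \<in> Mcarrier n \<Longrightarrow> p - q \<in> Mcarrier n"
  unfolding Mcarrier_def using keys_diff[of p q] by blast

lemma single_in_Mxcarrier:
  "Poly_Mapping.keys \<beta> \<subseteq> {..<n} \<Longrightarrow> a \<in> Mcarrier n \<Longrightarrow> Poly_Mapping.single \<beta> a \<in> Mxcarrier n"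
  unfolding Mxcarrier_def by (auto split: if_splits)

lemma diff_in_Mxcarrier:
  assumes "f \<in> Mxcarrier n" "g \<in> Mxcarrier n"
  shows "f - g \<in> Mxcarrier n"
  unfolding Mxcarrier_def
proof (intro CollectI ballI conjI)
  fix \<beta> assume \<beta>: "\<beta> \<in> Poly_Mapping.keys (f - g)"
  then have "\<beta> \<in> Poly_Mapping.keys f \<or> \<beta> \<in> Poly_Mapping.keys g"
    using keys_diff[of f g] by blast
  with assms show "Poly_Mapping.keys \<beta> \<subseteq> {..<n}"
    unfolding Mxcarrier_def by blast
  have "Poly_Mapping.lookup h \<beta> \<in> Mcarrier n" if "h \<in> Mxcarrier n" for h
    using that by (cases "\<beta> \<in> Poly_Mapping.keys h")
      (auto simp: Mxcarrier_def Mcarrier_def in_keys_iff)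
  with assms show "Poly_Mapping.lookup (f - g) \<beta> \<in> Mcarrier n"
    by (simp add: lookup_minus diff_in_Mcarrier)
qed

lemma qm0_binomial_square:
  assumes "Poly_Mapping.keys \<beta> \<subseteq> {..<n}" "Poly_Mapping.keys \<gamma> \<subseteq> {..<n}"
    and "a \<in> Mcarrier n" "b \<in> Mcarrier n"
  shows "a * a * mvar (\<beta> + \<beta>) - 2 * a * b * mvar (\<beta> + \<gamma>) + b * b * mvar (\<gamma> + \<gamma>) \<in> qm0 n"
proof -
  let ?f = "Poly_Mapping.single \<beta> a - Poly_Mapping.single \<gamma> b"
  have "?f \<in> Mxcarrier n"
    using assms by (intro diff_in_Mxcarrier single_in_Mxcarrier)
  then have "Lm (?f * ?f) \<in> qm0 n"
    by (rule qm0.gen)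
  then show ?thesis
    by (simp add: Lm_binomial_square[symmetric] power2_eq_square)
qed

definition qm0_le :: "nat \<Rightarrow> Mring \<Rightarrow> Mring \<Rightarrow> bool" where
  "qm0_le n a b \<longleftrightarrow> b - a \<in> qm0 n"

lemma qm0_le_trans: "qm0_le n a b \<Longrightarrow> qm0_le n b c \<Longrightarrow> qm0_le n a c"
  unfolding qm0_le_def using qm0.add[of "c - b" n "b - a"] by simp

lemma qm0_le_add_left: "qm0_le n a b \<Longrightarrow> qm0_le n (c + a) (c + b)"
  unfolding qm0_le_def by simp

lemma qm0_le_scale:
  assumes "qm0_le n a b" "0 \<le> c"
  shows "qm0_le n (constM c * a) (constM c * b)"
proof -
  have "constM (sqrt c) * constM (sqrt c) * (b - a) \<in> qm0 n"
    using assms unfolding qm0_le_def by (intro qm0.sqmult constM_in_Mcarrier)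
  with \<open>0 \<le> c\<close> show ?thesis
    unfolding qm0_le_def by (simp add: constM_mult right_diff_distrib)
qed

lemma mvar_square_le_mvar_double:
  assumes "Poly_Mapping.keys \<alpha> \<subseteq> {..<n}"
  shows "qm0_le n (mvar \<alpha> ^ 2) (mvar (\<alpha> + \<alpha>))"
proof -
  have "1 * 1 * mvar (\<alpha> + \<alpha>) - 2 * 1 * mvar \<alpha> * mvar (\<alpha> + 0) + mvar \<alpha> * mvar \<alpha> * mvar (0 + 0)
      \<in> qm0 n"
    using assms by (intro qm0_binomial_square one_in_Mcarrier mvar_in_Mcarrier) auto
  then show ?thesis
    by (simp add: qm0_le_def mvar_zero power2_eq_square algebra_simps)
qed

lemma mvar_add_le_midpoint:
  assumes "Poly_Mapping.keys \<beta> \<subseteq> {..<n}" "Poly_Mapping.keys \<gamma> \<subseteq> {..<n}"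
  shows "qm0_le n (mvar (\<beta> + \<gamma>)) (constM (1/2) * (mvar (\<beta> + \<beta>) + mvar (\<gamma> + \<gamma>)))"
proof -
  let ?X = "mvar (\<beta> + \<beta>)" and ?Y = "mvar (\<beta> + \<gamma>)" and ?Z = "mvar (\<gamma> + \<gamma>)"
  have "qm0_le n 0 (?X - 2 * ?Y + ?Z)"
    using qm0_binomial_square[OF assms one_in_Mcarrier one_in_Mcarrier] by (simp add: qm0_le_def)
  then have "qm0_le n (constM (1/2) * 0) (constM (1/2) * (?X - 2 * ?Y + ?Z))"
    by (rule qm0_le_scale) simp
  moreover have "constM (1/2) * (?X - 2 * ?Y + ?Z) = constM (1/2) * (?X + ?Z) - constM (1/2) * 2 * ?Y"
    by (simp add: algebra_simps)
  moreover have "constM (1/2) * 2 = 1"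
    using constM_add[of "1/2" "1/2"] by (simp add: mult_2_right distrib_left constM_one)
  ultimately show ?thesis
    by (simp add: qm0_le_def)
qed

definition scaled_tail :: "nat \<Rightarrow> mindex \<Rightarrow> nat \<Rightarrow> mindex" where
  "scaled_tail n i k = (\<Sum>c\<in>{k..<n}. Poly_Mapping.single c (2 ^ k * Poly_Mapping.lookup i c))"

lemma lookup_scaled_tail:
  "Poly_Mapping.lookup (scaled_tail n i k) d
    = (if k \<le> d \<and> d < n then 2 ^ k * Poly_Mapping.lookup i d else 0)"
  unfolding scaled_tail_def lookup_sum by (simp add: lookup_single when_def)

lemma keys_scaled_tail: "Poly_Mapping.keys (scaled_tail n i k) \<subseteq> {..<n}"
  by (auto simp: in_keys_iff lookup_scaled_tail split: if_splits)

lemma scaled_tail_0: "Poly_Mapping.keys i \<subseteq> {..<n} \<Longrightarrow> scaled_tail n i 0 = i"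
  by (rule poly_mapping_eqI) (auto simp: lookup_scaled_tail in_keys_iff)

lemma scaled_tail_double:
  "k < n \<Longrightarrow> scaled_tail n i k + scaled_tail n i k
    = Poly_Mapping.single k (2 ^ (k + 1) * Poly_Mapping.lookup i k) + scaled_tail n i (k + 1)"
  by (rule poly_mapping_eqI) (auto simp: lookup_add lookup_scaled_tail lookup_single when_def)

lemma scaled_tail_double_last:
  "n \<ge> 1 \<Longrightarrow> scaled_tail n i (n - 1) + scaled_tail n i (n - 1)
    = Poly_Mapping.single (n - 1) (2 ^ n * Poly_Mapping.lookup i (n - 1))"
  by (rule poly_mapping_eqI) (cases n, auto simp: lookup_add lookup_scaled_tail lookup_single when_def)

lemma scaled_tail_split_le:
  assumes "k < n"
  shows "qm0_le n (constM (1 / 2 ^ k) * mvar (scaled_tail n i k + scaled_tail n i k))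
    (constM (1 / 2 ^ (k + 1)) * mvar (Poly_Mapping.single k (2 ^ (k + 2) * Poly_Mapping.lookup i k))
      + constM (1 / 2 ^ (k + 1)) * mvar (scaled_tail n i (k + 1) + scaled_tail n i (k + 1)))"
proof -
  define \<beta> where "\<beta> = Poly_Mapping.single k (2 ^ (k + 1) * Poly_Mapping.lookup i k)"
  define \<gamma> where "\<gamma> = scaled_tail n i (k + 1)"
  have "\<beta> + \<beta> = Poly_Mapping.single k (2 ^ (k + 2) * Poly_Mapping.lookup i k)"
    unfolding \<beta>_def by (simp add: single_add[symmetric] mult_ac)
  moreover have "scaled_tail n i k + scaled_tail n i k = \<beta> + \<gamma>"
    unfolding \<beta>_def \<gamma>_def using assms by (rule scaled_tail_double)
  moreover have "qm0_le n (constM (1 / 2 ^ k) * mvar (\<beta> + \<gamma>))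
      (constM (1 / 2 ^ k) * (constM (1/2) * (mvar (\<beta> + \<beta>) + mvar (\<gamma> + \<gamma>))))"
    using assms unfolding \<beta>_def \<gamma>_def
    by (intro qm0_le_scale mvar_add_le_midpoint keys_scaled_tail) auto
  ultimately show ?thesis
    unfolding \<gamma>_def by (simp add: mult.assoc[symmetric] constM_mult distrib_left mult.commute[of 2])
qed

lemma mvar_square_le_partial_split:
  assumes "Poly_Mapping.keys i \<subseteq> {..<n}" "k < n"
  shows "qm0_le n (mvar i ^ 2)
    ((\<Sum>c<k. constM (1 / 2 ^ (c + 1)) * mvar (Poly_Mapping.single c (2 ^ (c + 2) * Poly_Mapping.lookup i c)))
      + constM (1 / 2 ^ k) * mvar (scaled_tail n i k + scaled_tail n i k))"
  using \<open>k < n\<close>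
proof (induction k)
  case 0
  then show ?case
    using mvar_square_le_mvar_double[OF assms(1)] by (simp add: constM_one scaled_tail_0[OF assms(1)])
next
  case (Suc k)
  then show ?case
    using qm0_le_trans[OF Suc.IH qm0_le_add_left[OF scaled_tail_split_le]]
    by (simp add: add.assoc)
qed

theorem lemma6p4:
  fixes n :: nat and i :: mindex
  assumes "n \<ge> 1" and "Poly_Mapping.keys i \<subseteq> {..<n}"
  shows "(\<Sum>j=1..n-1. constM (1 / 2 ^ j) * Lm (xvar (j - 1) ^ (2 ^ (j + 1) * Poly_Mapping.lookup i (j - 1))))
           + constM (1 / 2 ^ (n - 1)) * Lm (xvar (n - 1) ^ (2 ^ n * Poly_Mapping.lookup i (n - 1)))
           - mvar i ^ 2 \<in> qm0 n"
proof -
  have "(\<Sum>j=1..n-1. constM (1 / 2 ^ j) * Lm (xvar (j - 1) ^ (2 ^ (j + 1) * Poly_Mapping.lookup i (j - 1))))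
      = (\<Sum>c<n-1. constM (1 / 2 ^ (c + 1)) * mvar (Poly_Mapping.single c (2 ^ (c + 2) * Poly_Mapping.lookup i c)))"
    by (simp only: image_Suc_lessThan[symmetric] sum.reindex inj_Suc)
      (simp add: Lm_xvar_power)
  moreover have "Lm (xvar (n - 1) ^ (2 ^ n * Poly_Mapping.lookup i (n - 1)))
      = mvar (scaled_tail n i (n - 1) + scaled_tail n i (n - 1))"
    by (simp only: Lm_xvar_power scaled_tail_double_last[OF assms(1)])
  moreover have "n - 1 < n"
    using assms(1) by simp
  ultimately show ?thesis
    using mvar_square_le_partial_split[OF assms(2)] unfolding qm0_le_def by simp
qed

end
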